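(* Let $A=\begin{pmatrix}A_I & A_{I\Gamma}\\ A_{\Gamma I} & A_\Gamma\end{pmatrix}$ be symmetric positive definite ($A_{I\Gamma}=A_{\Gamma I}^\top$, $A_\Gamma\in\mathbb{R}^{n_\Gamma\times n_\Gamma}$), $S_\Gamma=A_\Gamma-A_{\Gamma I}A_I^{-1}A_{I\Gamma}$, $S_I=A_I-A_{I\Gamma}A_\Gamma^{-1}A_{\Gamma I}$, $A_\Gamma=R_\Gamma^\top R_\Gamma$ the Cholesky factorization, and $K=R_\Gamma^{-\top}A_{\Gamma I}S_I^{-1}A_{I\Gamma}R_\Gamma^{-1}$. Let $U_k\in\mathbb{R}^{n_\Gamma\times k}$ have orthonormal columns that are eigenvectors of $K$ with $KU_k=U_k\Sigma_k$, $\Sigma_k$ diagonal, and set $\mathcal{P}_1=I+U_k\Sigma_kU_k^\top$ and $B=R_\Gamma^{-\top}S_\Gamma R_\Gamma^{-1}$. Then $$\mathcal{P}_1B=B-U_k(I+\Sigma_k)^{-1}U_k^\top+U_kU_k^\top,$$ so that $\mathcal{P}_1B$ acts as the identity on the column space of $U_k$ and coincides with $B$ on its orthogonal complement (which is $B$-invariant). Moreover $\mathcal{P}_1B$ is spectrally equivalent to $\mathcal{M}_1S_\Gamma$ where $\mathcal{M}_1=A_\Gamma^{-1}+\breve Z_k\Sigma_k\breve Z_k^\top$ with $\breve Z_k=R_\Gamma^{-1}U_k$.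
   Context: $S_\Gamma$ and $S_I$ are the Schur complements of $A$ with respect to $A_\Gamma$ and $A_I$; $K$ is symmetric positive semidefinite and $R_\Gamma S_\Gamma^{-1}R_\Gamma^\top=I+K$. "Spectrally equivalent" means having the same eigenvalues with multiplicities. *)

theory Defs
  imports "Jordan_Normal_Form.Char_Poly" "Jordan_Normal_Form.Gauss_Jordan_Elimination"
begin

(* Matrix inverse (meaningful for invertible square matrices; junk value 0 otherwise). *)
definition mat_inv :: "real mat \<Rightarrow> real mat" where
  "mat_inv A = (case mat_inverse A of Some B \<Rightarrow> B | None \<Rightarrow> 0\<^sub>m (dim_row A) (dim_col A))"

definition spd_mat :: "nat \<Rightarrow> real mat \<Rightarrow> bool" where
  "spd_mat n A \<longleftrightarrow> A \<in> carrier_mat n n \<and> A\<^sup>T = A \<and>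
     (\<forall>x \<in> carrier_vec n. x \<noteq> 0\<^sub>v n \<longrightarrow> x \<bullet> (A *\<^sub>v x) > 0)"

definition cholesky_factor :: "nat \<Rightarrow> real mat \<Rightarrow> real mat \<Rightarrow> bool" where
  "cholesky_factor n A R \<longleftrightarrow> R \<in> carrier_mat n n \<and> upper_triangular R \<and>
     (\<forall>i < n. R $$ (i,i) > 0) \<and> A = R\<^sup>T * R"

end

theory Submission
  imports Defs
begin

text \<open>The key fact is that \<open>B\<close> is the inverse of \<open>I + K\<close>: the Sherman--Morrison--Woodbury
  formula gives \<open>S\<^sub>\<Gamma>\<^sup>-\<^sup>1 = A\<^sub>\<Gamma>\<^sup>-\<^sup>1 + A\<^sub>\<Gamma>\<^sup>-\<^sup>1 A\<^sub>\<Gamma>\<^sub>I S\<^sub>I\<^sup>-\<^sup>1 A\<^sub>I\<^sub>\<Gamma> A\<^sub>\<Gamma>\<^sup>-\<^sup>1\<close>, and conjugating with the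
  Cholesky factor turns this into \<open>R\<^sub>\<Gamma> S\<^sub>\<Gamma>\<^sup>-\<^sup>1 R\<^sub>\<Gamma>\<^sup>T = I + K\<close>. Hence the eigenvectors \<open>U\<^sub>k\<close> of \<open>K\<close>
  are eigenvectors of the symmetric matrix \<open>B\<close>, with \<open>B U\<^sub>k = U\<^sub>k (I + \<Sigma>\<^sub>k)\<^sup>-\<^sup>1\<close>, so that
  \<open>\<P>\<^sub>1 B = B + U\<^sub>k \<Sigma>\<^sub>k (I + \<Sigma>\<^sub>k)\<^sup>-\<^sup>1 U\<^sub>k\<^sup>T\<close>, and \<open>\<Sigma>(I + \<Sigma>)\<^sup>-\<^sup>1 = I - (I + \<Sigma>)\<^sup>-\<^sup>1\<close> gives the formula.
  Finally \<open>\<M>\<^sub>1 = R\<^sub>\<Gamma>\<^sup>-\<^sup>1 \<P>\<^sub>1 R\<^sub>\<Gamma>\<^sup>-\<^sup>T\<close>, so \<open>\<M>\<^sub>1 S\<^sub>\<Gamma> = R\<^sub>\<Gamma>\<^sup>-\<^sup>1 (\<P>\<^sub>1 B) R\<^sub>\<Gamma>\<close> is similar to \<open>\<P>\<^sub>1 B\<close>.\<close>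

lemma assoc_mult_mat_dim:
  "dim_col A = dim_row B \<Longrightarrow> dim_col B = dim_row C \<Longrightarrow> A * B * C = A * (B * C)"
  by (rule assoc_mult_mat[of A "dim_row A" "dim_col A" B "dim_col B" C "dim_col C"]) auto

lemma mult_add_distrib_mat_dim:
  "dim_col A = dim_row B \<Longrightarrow> dim_row C = dim_row B \<Longrightarrow> dim_col C = dim_col B \<Longrightarrow>
    A * (B + C) = A * B + A * C"
  by (rule mult_add_distrib_mat[of A "dim_row A" "dim_col A" B "dim_col B"]) auto

lemma add_mult_distrib_mat_dim:
  "dim_row A = dim_row B \<Longrightarrow> dim_col A = dim_col B \<Longrightarrow> dim_col B = dim_row C \<Longrightarrow>
    (A + B) * C = A * C + B * C"
  by (rule add_mult_distrib_mat[of A "dim_row A" "dim_col A" B C "dim_col C"]) auto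

lemma mult_minus_distrib_mat_dim:
  "dim_col A = dim_row B \<Longrightarrow> dim_row C = dim_row B \<Longrightarrow> dim_col C = dim_col B \<Longrightarrow>
    A * (B - C) = A * B - (A * C :: 'a :: ring mat)"
  by (rule mult_minus_distrib_mat[of A "dim_row A" "dim_col A" B "dim_col B"]) auto

lemma minus_mult_distrib_mat_dim:
  "dim_row A = dim_row B \<Longrightarrow> dim_col A = dim_col B \<Longrightarrow> dim_col B = dim_row C \<Longrightarrow>
    (A - B) * C = A * C - (B * C :: 'a :: ring mat)"
  by (rule minus_mult_distrib_mat[of A "dim_row A" "dim_col A" B C "dim_col C"]) auto

lemma transpose_mult_dim:
  "dim_col A = dim_row B \<Longrightarrow> (A * B :: 'a :: comm_semiring_0 mat)\<^sup>T = B\<^sup>T * A\<^sup>T"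
  by (rule transpose_mult[of A "dim_row A" "dim_col A" B "dim_col B"]) auto

lemma transpose_add_dim:
  "dim_row A = dim_row B \<Longrightarrow> dim_col A = dim_col B \<Longrightarrow> (A + B :: 'a :: monoid_add mat)\<^sup>T = A\<^sup>T + B\<^sup>T"
  by (rule transpose_add[of A "dim_row A" "dim_col A"]) auto

lemma transpose_minus_dim:
  "dim_row A = dim_row B \<Longrightarrow> dim_col A = dim_col B \<Longrightarrow> (A - B :: 'a :: group_add mat)\<^sup>T = A\<^sup>T - B\<^sup>T"
  by (rule transpose_minus[of A "dim_row A" "dim_col A"]) auto

lemma mult_right_inverse_cancel:
  "A * B = 1\<^sub>m n \<Longrightarrow> A \<in> carrier_mat n n \<Longrightarrow> B \<in> carrier_mat n n \<Longrightarrow> dim_row C = n \<Longrightarrow>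
    A * (B * C) = (C :: 'a :: semiring_1 mat)"
  by (subst assoc_mult_mat_dim[symmetric]) auto

lemma mult_mat_vec_zero: "A \<in> carrier_mat nr nc \<Longrightarrow> A *\<^sub>v 0\<^sub>v nc = (0\<^sub>v nr :: 'a :: semiring_0 vec)"
  by (intro eq_vecI) (auto simp: scalar_prod_def)

lemma transpose_diagonal_mat: "A \<in> carrier_mat n n \<Longrightarrow> diagonal_mat A \<Longrightarrow> A\<^sup>T = A"
  by (intro eq_matI) (auto simp: diagonal_mat_def, metis)

lemma mat_inv:
  assumes A: "A \<in> carrier_mat n n" and det: "det A \<noteq> 0"
  shows "mat_inv A \<in> carrier_mat n n" "A * mat_inv A = 1\<^sub>m n" "mat_inv A * A = 1\<^sub>m n"
proof -
  have "A \<in> Units (ring_mat TYPE(real) n ())" by (rule det_non_zero_imp_unit[OF A det])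
  then obtain B where "mat_inverse A = Some B" using mat_inverse(1)[OF A] by (metis option.exhaust)
  with mat_inverse(2)[OF A this]
  show "mat_inv A \<in> carrier_mat n n" "A * mat_inv A = 1\<^sub>m n" "mat_inv A * A = 1\<^sub>m n"
    unfolding mat_inv_def by auto
qed

lemma mat_inv_eqI:
  assumes A: "A \<in> carrier_mat n n" and B: "B \<in> carrier_mat n n" and AB: "A * B = 1\<^sub>m n"
  shows "mat_inv A = B"
proof -
  have "det A * det B = 1" using det_mult[OF A B] AB by simp
  hence "det A \<noteq> 0" by auto
  note A' = mat_inv[OF A this]
  have "mat_inv A = mat_inv A * (A * B)" using AB A' by simp
  also have "\<dots> = B" using A' A B by (simp add: assoc_mult_mat_dim[symmetric])
  finally show ?thesis .
qed

lemma det_nonzero_if_trivial_kernel: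
  assumes "(A :: 'a :: field mat) \<in> carrier_mat n n"
    and "\<And>v. v \<in> carrier_vec n \<Longrightarrow> A *\<^sub>v v = 0\<^sub>v n \<Longrightarrow> v = 0\<^sub>v n"
  shows "det A \<noteq> 0"
  using det_0_iff_vec_prod_zero_field[OF assms(1)] assms(2) by blast

lemma transpose_mat_inv_sym:
  assumes A: "A \<in> carrier_mat n n" and sym: "A\<^sup>T = A" and det: "det A \<noteq> 0"
  shows "(mat_inv A)\<^sup>T = mat_inv A"
proof -
  note A' = mat_inv[OF A det]
  have "A * (mat_inv A)\<^sup>T = (mat_inv A * A)\<^sup>T"
    using transpose_mult_dim[of "mat_inv A" A] sym A A'(1) by simp
  also have "\<dots> = 1\<^sub>m n" using A' by simp
  finally have "A * (mat_inv A)\<^sup>T = 1\<^sub>m n" .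
  from mat_inv_eqI[OF A _ this] A' show ?thesis by auto
qed

lemma congruence_inverse:
  assumes R: "(R :: 'a :: comm_ring_1 mat) \<in> carrier_mat n n" and Ri: "Ri \<in> carrier_mat n n"
    and S: "S \<in> carrier_mat n n" and X: "X \<in> carrier_mat n n"
    and R_Ri: "R * Ri = 1\<^sub>m n" and Ri_R: "Ri * R = 1\<^sub>m n" and S_X: "S * X = 1\<^sub>m n"
  shows "(Ri\<^sup>T * S * Ri) * (R * X * R\<^sup>T) = 1\<^sub>m n"
proof -
  have "(Ri\<^sup>T * S * Ri) * (R * X * R\<^sup>T) = Ri\<^sup>T * (S * ((Ri * R) * (X * R\<^sup>T)))"
    using R Ri S X by (simp add: assoc_mult_mat_dim)
  also have "\<dots> = Ri\<^sup>T * R\<^sup>T"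
    using R Ri X Ri_R mult_right_inverse_cancel[OF S_X S X] by simp
  also have "\<dots> = (R * Ri)\<^sup>T"
    using R Ri by (simp add: transpose_mult_dim)
  finally show ?thesis using R_Ri by simp
qed

lemma char_poly_congruence_mult:
  assumes R: "R \<in> carrier_mat n n" and det_R: "det R \<noteq> 0"
    and P: "P \<in> carrier_mat n n" and S: "S \<in> carrier_mat n n"
  shows "char_poly (mat_inv R * P * (mat_inv R)\<^sup>T * S) = char_poly (P * ((mat_inv R)\<^sup>T * S * mat_inv R))"
proof (rule char_poly_similar, rule similar_matI)
  note Ri = mat_inv[OF R det_R]
  show "{mat_inv R * P * (mat_inv R)\<^sup>T * S, P * ((mat_inv R)\<^sup>T * S * mat_inv R), mat_inv R, R}
    \<subseteq> carrier_mat n n" using R Ri P S by auto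
  show "mat_inv R * R = 1\<^sub>m n" "R * mat_inv R = 1\<^sub>m n" using Ri by auto
  show "mat_inv R * P * (mat_inv R)\<^sup>T * S = mat_inv R * (P * ((mat_inv R)\<^sup>T * S * mat_inv R)) * R"
    using R Ri P S by (simp add: assoc_mult_mat_dim)
qed

lemma schur_complement_inverse:
  assumes AI: "AI \<in> carrier_mat nI nI" and AIG: "AIG \<in> carrier_mat nI nG"
    and AGI: "AGI \<in> carrier_mat nG nI" and AG: "AG \<in> carrier_mat nG nG"
    and det_AI: "det AI \<noteq> 0" and det_AG: "det AG \<noteq> 0"
    and det_SI: "det (AI - AIG * mat_inv AG * AGI) \<noteq> 0"
  shows "(AG - AGI * mat_inv AI * AIG) *
    (mat_inv AG + mat_inv AG * AGI * mat_inv (AI - AIG * mat_inv AG * AGI) * AIG * mat_inv AG) = 1\<^sub>m nG"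
proof -
  define SI where "SI = AI - AIG * mat_inv AG * AGI"
  have SI: "SI \<in> carrier_mat nI nI" unfolding SI_def using AI AIG AGI mat_inv[OF AG det_AG] by auto
  note AIi = mat_inv[OF AI det_AI] and AGi = mat_inv[OF AG det_AG] and SIi = mat_inv[OF SI det_SI[folded SI_def]]
  note cancel = mult_right_inverse_cancel[OF AGi(2) AG AGi(1)] mult_right_inverse_cancel[OF AIi(3) AIi(1) AI]
    mult_right_inverse_cancel[OF SIi(2) SI SIi(1)]
  have AIG_AGi_AGI: "AIG * (mat_inv AG * AGI) = AI - SI" unfolding SI_def
    by (intro eq_matI) (use AI AIG AGi AGI in \<open>auto simp: assoc_mult_mat_dim\<close>)
  have key: "mat_inv AI * (AIG * (mat_inv AG * (AGI * (mat_inv SI * C)))) = mat_inv SI * C - mat_inv AI * C"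
    if C: "dim_row C = nI" for C
  proof -
    have "mat_inv AI * (AIG * (mat_inv AG * (AGI * (mat_inv SI * C))))
        = mat_inv AI * ((AIG * (mat_inv AG * AGI)) * (mat_inv SI * C))"
      using AI AIG AGi AGI SIi C by (simp add: assoc_mult_mat_dim)
    also have "\<dots> = mat_inv SI * C - mat_inv AI * C"
      unfolding AIG_AGi_AGI using AI SI SIi AIi C cancel
      by (simp add: mult_minus_distrib_mat_dim minus_mult_distrib_mat_dim)
    finally show ?thesis .
  qed
  let ?X = "mat_inv AI * (AIG * mat_inv AG)"
  have "(AG - AGI * mat_inv AI * AIG) * (mat_inv AG + mat_inv AG * AGI * mat_inv SI * AIG * mat_inv AG)
      = 1\<^sub>m nG - AGI * ?X + (AGI * (mat_inv SI * (AIG * mat_inv AG))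
          - (AGI * (mat_inv SI * (AIG * mat_inv AG)) - AGI * ?X))"
    using AG AIG AGI AIi AGi SIi AI cancel key
    by (simp add: assoc_mult_mat_dim mult_minus_distrib_mat_dim minus_mult_distrib_mat_dim
        mult_add_distrib_mat_dim add_mult_distrib_mat_dim)
  also have "\<dots> = 1\<^sub>m nG"
    by (intro eq_matI) (use AIG AGI AIi AGi SIi in auto)
  finally show ?thesis unfolding SI_def .
qed

lemma cholesky_factor_det:
  assumes "cholesky_factor n A R"
  shows "det R \<noteq> 0" "det A \<noteq> 0"
proof -
  have R: "R \<in> carrier_mat n n" "upper_triangular R" "\<forall>i<n. R $$ (i, i) > 0" and A: "A = R\<^sup>T * R"
    using assms unfolding cholesky_factor_def by auto
  have "0 \<notin> set (diag_mat R)" using R unfolding diag_mat_def by auto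
  then show det_R: "det R \<noteq> 0" using det_upper_triangular[OF R(2,1)] by (simp add: prod_list_zero_iff)
  have "det A = det R * det R"
    unfolding A using det_mult[of "R\<^sup>T" n R] det_transpose[OF R(1)] R(1) by simp
  then show "det A \<noteq> 0" using det_R by simp
qed

lemma cholesky_factor_mat_inv:
  assumes chol: "cholesky_factor n A R"
  shows "mat_inv A = mat_inv R * (mat_inv R)\<^sup>T"
proof -
  have R: "R \<in> carrier_mat n n" and A: "A = R\<^sup>T * R"
    using chol unfolding cholesky_factor_def by auto
  note Ri = mat_inv[OF R cholesky_factor_det(1)[OF chol]]
  have RtRit: "R\<^sup>T * (mat_inv R)\<^sup>T = 1\<^sub>m n"
    using transpose_mult_dim[of "mat_inv R" R] Ri R by simp
  have "A * (mat_inv R * (mat_inv R)\<^sup>T) = R\<^sup>T * ((R * mat_inv R) * (mat_inv R)\<^sup>T)"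
    unfolding A using R Ri(1) by (simp add: assoc_mult_mat_dim)
  also have "\<dots> = 1\<^sub>m n" using Ri RtRit by simp
  finally show ?thesis using A R Ri by (intro mat_inv_eqI[of _ n]) auto
qed

lemma cholesky_factor_preconditioner:
  assumes chol: "cholesky_factor n A R" and U: "U \<in> carrier_mat n k" and Sig: "Sig \<in> carrier_mat k k"
  shows "mat_inv A + (mat_inv R * U) * Sig * (mat_inv R * U)\<^sup>T
    = mat_inv R * (1\<^sub>m n + U * Sig * U\<^sup>T) * (mat_inv R)\<^sup>T"
proof -
  have R: "R \<in> carrier_mat n n" using chol unfolding cholesky_factor_def by auto
  note Ri = mat_inv[OF R cholesky_factor_det(1)[OF chol]]
  show ?thesis unfolding cholesky_factor_mat_inv[OF chol]
    using Ri(1) U Sig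
    by (simp add: transpose_mult_dim assoc_mult_mat_dim mult_add_distrib_mat_dim add_mult_distrib_mat_dim)
qed

lemma inverse_eigenvectors:
  fixes B K U Sig :: "real mat"
  assumes B: "B \<in> carrier_mat n n" and K: "K \<in> carrier_mat n n" and B_inv: "B * (1\<^sub>m n + K) = 1\<^sub>m n"
    and U: "U \<in> carrier_mat n k" and U_orth: "U\<^sup>T * U = 1\<^sub>m k"
    and Sig: "Sig \<in> carrier_mat k k" and eig: "K * U = U * Sig"
  shows "det (1\<^sub>m k + Sig) \<noteq> 0" and "B * U = U * mat_inv (1\<^sub>m k + Sig)"
proof -
  have IS: "1\<^sub>m k + Sig \<in> carrier_mat k k" using Sig by auto
  have "B * U * (1\<^sub>m k + Sig) = B * ((1\<^sub>m n + K) * U)"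
    using B K U Sig eig by (simp add: assoc_mult_mat_dim mult_add_distrib_mat_dim add_mult_distrib_mat_dim)
  also have "\<dots> = U" using B_inv B K U by (simp add: assoc_mult_mat_dim[symmetric])
  finally have BU_IS: "B * U * (1\<^sub>m k + Sig) = U" .
  show det_IS: "det (1\<^sub>m k + Sig) \<noteq> 0"
  proof (rule det_nonzero_if_trivial_kernel[OF IS])
    fix y assume y: "y \<in> carrier_vec k" and IS_y: "(1\<^sub>m k + Sig) *\<^sub>v y = 0\<^sub>v k"
    have "U *\<^sub>v y = (B * U * (1\<^sub>m k + Sig)) *\<^sub>v y" using BU_IS by simp
    also have "\<dots> = (B * U) *\<^sub>v ((1\<^sub>m k + Sig) *\<^sub>v y)"
      by (rule assoc_mult_mat_vec[OF _ IS y]) (use B U in auto)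
    also have "\<dots> = 0\<^sub>v n" unfolding IS_y by (rule mult_mat_vec_zero) (use B U in auto)
    finally have "U\<^sup>T *\<^sub>v (U *\<^sub>v y) = 0\<^sub>v k" using U by (simp add: mult_mat_vec_zero)
    then show "y = 0\<^sub>v k" using U_orth U y by (simp add: assoc_mult_mat_vec[symmetric])
  qed
  note D = mat_inv[OF IS det_IS]
  have "B * U = B * U * ((1\<^sub>m k + Sig) * mat_inv (1\<^sub>m k + Sig))" using D B U by simp
  also have "\<dots> = (B * U * (1\<^sub>m k + Sig)) * mat_inv (1\<^sub>m k + Sig)"
    using B U Sig D(1) by (simp add: assoc_mult_mat_dim)
  finally show "B * U = U * mat_inv (1\<^sub>m k + Sig)" unfolding BU_IS .
qed

lemma deflated_preconditioner_eq:
  fixes B U Sig :: "real mat"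
  assumes B: "B \<in> carrier_mat n n" and B_sym: "B\<^sup>T = B"
    and U: "U \<in> carrier_mat n k" and Sig: "Sig \<in> carrier_mat k k" and Sig_sym: "Sig\<^sup>T = Sig"
    and det_IS: "det (1\<^sub>m k + Sig) \<noteq> 0" and BU: "B * U = U * mat_inv (1\<^sub>m k + Sig)"
  shows "(1\<^sub>m n + U * Sig * U\<^sup>T) * B = B - U * mat_inv (1\<^sub>m k + Sig) * U\<^sup>T + U * U\<^sup>T"
proof -
  define D where "D = mat_inv (1\<^sub>m k + Sig)"
  have IS: "1\<^sub>m k + Sig \<in> carrier_mat k k" using Sig by auto
  note D = mat_inv[OF IS det_IS, folded D_def]
  have "(1\<^sub>m k + Sig)\<^sup>T = 1\<^sub>m k + Sig" using Sig Sig_sym by (simp add: transpose_add_dim)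
  from transpose_mat_inv_sym[OF IS this det_IS] have D_sym: "D\<^sup>T = D" unfolding D_def .
  have UT_B: "U\<^sup>T * B = D * U\<^sup>T"
    using arg_cong[OF BU[folded D_def], of transpose_mat] B U D(1) B_sym D_sym
    by (simp add: transpose_mult_dim)
  have D_Sig_D: "D + Sig * D = 1\<^sub>m k" using D Sig by (simp add: add_mult_distrib_mat_dim)
  have Sig_D: "Sig * D = 1\<^sub>m k - D"
  proof (rule eq_matI)
    fix i j assume "i < dim_row (1\<^sub>m k - D)" "j < dim_col (1\<^sub>m k - D)"
    moreover have "(D + Sig * D) $$ (i, j) = 1\<^sub>m k $$ (i, j)" unfolding D_Sig_D ..
    ultimately show "(Sig * D) $$ (i, j) = (1\<^sub>m k - D) $$ (i, j)" using D(1) Sig by auto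
  qed (use D(1) Sig in auto)
  have "(1\<^sub>m n + U * Sig * U\<^sup>T) * B = B + U * ((Sig * D) * U\<^sup>T)"
    using B U Sig D(1) UT_B by (simp add: add_mult_distrib_mat_dim assoc_mult_mat_dim)
  also have "\<dots> = B - U * D * U\<^sup>T + U * U\<^sup>T"
    unfolding Sig_D using B U D(1)
    by (intro eq_matI) (auto simp: minus_mult_distrib_mat_dim mult_minus_distrib_mat_dim assoc_mult_mat_dim)
  finally show ?thesis unfolding D_def .
qed

lemma deflated_mult_range:
  fixes B U D :: "real mat"
  assumes B: "B \<in> carrier_mat n n" and U: "U \<in> carrier_mat n k" and D: "D \<in> carrier_mat k k"
    and U_orth: "U\<^sup>T * U = 1\<^sub>m k" and BU: "B * U = U * D" and y: "y \<in> carrier_vec k"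
  shows "(B - U * D * U\<^sup>T + U * U\<^sup>T) *\<^sub>v (U *\<^sub>v y) = U *\<^sub>v y"
proof -
  have "(B - U * D * U\<^sup>T + U * U\<^sup>T) * U = U * D - U * D + U"
    using B U D U_orth BU
    by (simp add: assoc_mult_mat_dim add_mult_distrib_mat_dim minus_mult_distrib_mat_dim)
  also have "\<dots> = U" by (intro eq_matI) (use U D in auto)
  finally show ?thesis
    using assoc_mult_mat_vec[of "B - U * D * U\<^sup>T + U * U\<^sup>T" n n U k y] B U D y by simp
qed

lemma deflated_mult_orthogonal:
  fixes B U D :: "real mat"
  assumes B: "B \<in> carrier_mat n n" and U: "U \<in> carrier_mat n k" and D: "D \<in> carrier_mat k k"
    and x: "x \<in> carrier_vec n" and Ux: "U\<^sup>T *\<^sub>v x = 0\<^sub>v k"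
  shows "(B - U * D * U\<^sup>T + U * U\<^sup>T) *\<^sub>v x = B *\<^sub>v x"
proof -
  have UT: "U\<^sup>T \<in> carrier_mat k n" using U by simp
  have "(U * D * U\<^sup>T) *\<^sub>v x = (U * D) *\<^sub>v (U\<^sup>T *\<^sub>v x)"
    using assoc_mult_mat_vec[OF mult_carrier_mat[OF U D] UT x] .
  moreover have "(U * U\<^sup>T) *\<^sub>v x = U *\<^sub>v (U\<^sup>T *\<^sub>v x)" using assoc_mult_mat_vec[OF U UT x] .
  ultimately have UDU: "(U * D * U\<^sup>T) *\<^sub>v x = 0\<^sub>v n" and UU: "(U * U\<^sup>T) *\<^sub>v x = 0\<^sub>v n"
    unfolding Ux using U D by (simp_all add: mult_mat_vec_zero)
  have UDU_c: "U * D * U\<^sup>T \<in> carrier_mat n n" and UU_c: "U * U\<^sup>T \<in> carrier_mat n n" using U D by auto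
  have "(B - U * D * U\<^sup>T + U * U\<^sup>T) *\<^sub>v x = B *\<^sub>v x - (U * D * U\<^sup>T) *\<^sub>v x + (U * U\<^sup>T) *\<^sub>v x"
    using add_mult_distrib_mat_vec[OF minus_carrier_mat[OF UDU_c] UU_c x]
      minus_mult_distrib_mat_vec[OF B UDU_c x] B by simp
  then show ?thesis unfolding UDU UU using B x by simp
qed

lemma orthogonal_complement_invariant:
  fixes B U D :: "real mat"
  assumes B: "B \<in> carrier_mat n n" and B_sym: "B\<^sup>T = B" and U: "U \<in> carrier_mat n k"
    and D: "D \<in> carrier_mat k k" and BU: "B * U = U * D"
    and x: "x \<in> carrier_vec n" and Ux: "U\<^sup>T *\<^sub>v x = 0\<^sub>v k"
  shows "U\<^sup>T *\<^sub>v (B *\<^sub>v x) = 0\<^sub>v k"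
proof -
  have "U\<^sup>T * B = D\<^sup>T * U\<^sup>T"
    using arg_cong[OF BU, of transpose_mat] B U D B_sym by (simp add: transpose_mult_dim)
  then have "U\<^sup>T *\<^sub>v (B *\<^sub>v x) = D\<^sup>T *\<^sub>v (U\<^sup>T *\<^sub>v x)"
    using B U D x by (metis assoc_mult_mat_vec transpose_carrier_mat)
  then show ?thesis unfolding Ux using D by (simp add: mult_mat_vec_zero)
qed

context
  fixes AI AIG AGI AG :: "real mat" and nI nG :: nat
  assumes AI: "AI \<in> carrier_mat nI nI" and AIG: "AIG \<in> carrier_mat nI nG"
    and AGI: "AGI \<in> carrier_mat nG nI" and AG: "AG \<in> carrier_mat nG nG"
    and spd: "spd_mat (nI + nG) (four_block_mat AI AIG AGI AG)"
begin

lemma spd_four_block_kernel: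
  assumes x: "x \<in> carrier_vec nI" and y: "y \<in> carrier_vec nG"
    and eq1: "AI *\<^sub>v x + AIG *\<^sub>v y = 0\<^sub>v nI"
    and eq2: "y = 0\<^sub>v nG \<or> AGI *\<^sub>v x + AG *\<^sub>v y = 0\<^sub>v nG"
  shows "x = 0\<^sub>v nI"
proof (rule ccontr)
  let ?A = "four_block_mat AI AIG AGI AG"
  assume "x \<noteq> 0\<^sub>v nI"
  then obtain i where i: "i < nI" "x $ i \<noteq> 0" using x by (metis eq_vecI carrier_vecD index_zero_vec(1,2))
  have xy: "x @\<^sub>v y \<in> carrier_vec (nI + nG)" using x y by simp
  have "(x @\<^sub>v y) $ i \<noteq> 0" using i x y by simp
  hence nz: "x @\<^sub>v y \<noteq> 0\<^sub>v (nI + nG)" using i by auto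
  have "?A *\<^sub>v (x @\<^sub>v y) = (AI *\<^sub>v x + AIG *\<^sub>v y) @\<^sub>v (AGI *\<^sub>v x + AG *\<^sub>v y)"
    by (rule four_block_mat_mult_vec[OF AI AIG AGI AG x y])
  hence "(x @\<^sub>v y) \<bullet> (?A *\<^sub>v (x @\<^sub>v y)) = x \<bullet> (AI *\<^sub>v x + AIG *\<^sub>v y) + y \<bullet> (AGI *\<^sub>v x + AG *\<^sub>v y)"
    using scalar_prod_append[OF x y, of "AI *\<^sub>v x + AIG *\<^sub>v y" "AGI *\<^sub>v x + AG *\<^sub>v y"] AI AIG AGI AG x y
    by simp
  also have "\<dots> = 0" using eq1 eq2 x y AGI AG by auto
  finally show False using spd xy nz unfolding spd_mat_def by auto
qed

lemma spd_four_block_sym: "AI\<^sup>T = AI" "AIG\<^sup>T = AGI" "AG\<^sup>T = AG"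
proof -
  let ?A = "four_block_mat AI AIG AGI AG"
  have sym: "?A $$ (j, i) = ?A $$ (i, j)" if "i < nI + nG" "j < nI + nG" for i j
  proof -
    have "?A\<^sup>T $$ (i, j) = ?A $$ (i, j)" using spd unfolding spd_mat_def by simp
    thus ?thesis using that AI AIG AGI AG by simp
  qed
  show "AI\<^sup>T = AI"
  proof (rule eq_matI)
    fix i j assume "i < dim_row AI" "j < dim_col AI"
    thus "AI\<^sup>T $$ (i, j) = AI $$ (i, j)" using AI AIG AGI AG sym[of j i] by simp
  qed (use AI in auto)
  show "AIG\<^sup>T = AGI"
  proof (rule eq_matI)
    fix i j assume "i < dim_row AGI" "j < dim_col AGI"
    thus "AIG\<^sup>T $$ (i, j) = AGI $$ (i, j)" using AI AIG AGI AG sym[of j "nI + i"] by simp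
  qed (use AIG AGI in auto)
  show "AG\<^sup>T = AG"
  proof (rule eq_matI)
    fix i j assume "i < dim_row AG" "j < dim_col AG"
    thus "AG\<^sup>T $$ (i, j) = AG $$ (i, j)" using AI AIG AGI AG sym[of "nI + j" "nI + i"] by simp
  qed (use AG in auto)
qed

lemma spd_four_block_upper_left_det: "det AI \<noteq> 0"
proof (rule det_nonzero_if_trivial_kernel[OF AI])
  fix v assume "v \<in> carrier_vec nI" "AI *\<^sub>v v = 0\<^sub>v nI"
  then show "v = 0\<^sub>v nI"
    using spd_four_block_kernel[of v "0\<^sub>v nG"] mult_mat_vec_zero[OF AIG] by auto
qed

lemma spd_four_block_schur_complement_det:
  assumes det: "det AG \<noteq> 0"
  shows "det (AI - AIG * mat_inv AG * AGI) \<noteq> 0"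
proof -
  let ?SI = "AI - AIG * mat_inv AG * AGI"
  note AGi = mat_inv[OF AG det]
  have SI: "?SI \<in> carrier_mat nI nI" using AI AIG AGi AGI by auto
  show ?thesis
  proof (rule det_nonzero_if_trivial_kernel[OF SI])
    fix x assume x: "x \<in> carrier_vec nI" and SIx: "?SI *\<^sub>v x = 0\<^sub>v nI"
    \<comment> \<open>The quadratic form vanishes at \<open>(x, -A\<^sub>\<Gamma>\<^sup>-\<^sup>1 A\<^sub>\<Gamma>\<^sub>I x)\<close>.\<close>
    define w where "w = mat_inv AG *\<^sub>v (AGI *\<^sub>v x)"
    have w: "w \<in> carrier_vec nG" unfolding w_def using AGi AGI x by auto
    have AIGw: "AIG *\<^sub>v w = (AIG * mat_inv AG * AGI) *\<^sub>v x"
      unfolding w_def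
      using assoc_mult_mat_vec[OF mult_carrier_mat[OF AIG AGi(1)] AGI x]
        assoc_mult_mat_vec[OF AIG AGi(1) mult_mat_vec_carrier[OF AGI x]] by (simp only:)
    have "?SI *\<^sub>v x = AI *\<^sub>v x - AIG *\<^sub>v w" unfolding AIGw
      by (rule minus_mult_distrib_mat_vec[OF AI _ x]) (use AIG AGi AGI in auto)
    hence diff: "AI *\<^sub>v x - AIG *\<^sub>v w = 0\<^sub>v nI" using SIx by simp
    have AIx: "AI *\<^sub>v x = AIG *\<^sub>v w"
    proof (rule eq_vecI)
      fix i assume "i < dim_vec (AIG *\<^sub>v w)"
      moreover have "(AI *\<^sub>v x - AIG *\<^sub>v w) $ i = 0\<^sub>v nI $ i" using diff by simp
      ultimately show "(AI *\<^sub>v x) $ i = (AIG *\<^sub>v w) $ i" using AI AIG by simp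
    qed (use AI AIG in simp)
    have AGw: "AG *\<^sub>v w = AGI *\<^sub>v x" unfolding w_def using AG AGi AGI x
      by (metis assoc_mult_mat_vec mult_mat_vec_carrier one_mult_mat_vec)
    show "x = 0\<^sub>v nI"
    proof (rule spd_four_block_kernel[OF x smult_carrier_vec[of "-1", THEN iffD2, OF w]])
      show "AI *\<^sub>v x + AIG *\<^sub>v ((-1) \<cdot>\<^sub>v w) = 0\<^sub>v nI"
        unfolding mult_mat_vec[OF AIG w] AIx by (intro eq_vecI) (use AIG w in auto)
      show "(-1) \<cdot>\<^sub>v w = 0\<^sub>v nG \<or> AGI *\<^sub>v x + AG *\<^sub>v ((-1) \<cdot>\<^sub>v w) = 0\<^sub>v nG"
        unfolding mult_mat_vec[OF AG w] AGw by (intro disjI2 eq_vecI) (use AGI x in auto)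
    qed
  qed
qed

lemma schur_complement_sym: "(AG - AGI * mat_inv AI * AIG)\<^sup>T = AG - AGI * mat_inv AI * AIG"
proof -
  note AIi = mat_inv[OF AI spd_four_block_upper_left_det]
  have AIi_sym: "(mat_inv AI)\<^sup>T = mat_inv AI"
    by (rule transpose_mat_inv_sym[OF AI spd_four_block_sym(1) spd_four_block_upper_left_det])
  have "AGI\<^sup>T = AIG" using spd_four_block_sym(2) by auto
  then show ?thesis using AG AIG AGI AIi AIi_sym spd_four_block_sym
    by (simp add: transpose_minus_dim transpose_mult_dim assoc_mult_mat_dim)
qed

context
  fixes RG :: "real mat"
  assumes chol: "cholesky_factor nG AG RG"
begin

lemma preconditioned_schur_complement_inverse:
  "(mat_inv RG)\<^sup>T * (AG - AGI * mat_inv AI * AIG) * mat_inv RG *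
    (1\<^sub>m nG + (mat_inv RG)\<^sup>T * AGI * mat_inv (AI - AIG * mat_inv AG * AGI) * AIG * mat_inv RG) = 1\<^sub>m nG"
proof -
  have RG: "RG \<in> carrier_mat nG nG" using chol unfolding cholesky_factor_def by auto
  note Ri = mat_inv[OF RG cholesky_factor_det(1)[OF chol]]
  have Ri_RG_T: "(mat_inv RG)\<^sup>T * RG\<^sup>T = 1\<^sub>m nG"
    using transpose_mult_dim[of RG "mat_inv RG"] Ri RG by simp
  note det_AG = cholesky_factor_det(2)[OF chol]
  note det_SI = spd_four_block_schur_complement_det[OF det_AG]
  define SI where "SI = AI - AIG * mat_inv AG * AGI"
  have SIi: "mat_inv SI \<in> carrier_mat nI nI"
    unfolding SI_def by (rule mat_inv(1)[OF _ det_SI]) (use AI AIG AGI mat_inv[OF AG det_AG] in auto)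
  define X where "X = mat_inv AG + mat_inv AG * AGI * mat_inv SI * AIG * mat_inv AG"
  have X: "X \<in> carrier_mat nG nG" unfolding X_def using mat_inv[OF AG det_AG] AGI AIG SIi by auto
  have "1\<^sub>m nG + (mat_inv RG)\<^sup>T * AGI * mat_inv SI * AIG * mat_inv RG = RG * X * RG\<^sup>T"
    unfolding X_def cholesky_factor_mat_inv[OF chol]
    using RG Ri AGI SIi AIG Ri_RG_T mult_right_inverse_cancel[OF Ri(2) RG Ri(1)]
      mult_right_inverse_cancel[OF Ri_RG_T]
    by (simp add: assoc_mult_mat_dim mult_add_distrib_mat_dim add_mult_distrib_mat_dim)
  moreover have "(AG - AGI * mat_inv AI * AIG) * X = 1\<^sub>m nG"
    unfolding X_def SI_def
    by (rule schur_complement_inverse[OF AI AIG AGI AG spd_four_block_upper_left_det det_AG det_SI])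
  moreover have "AG - AGI * mat_inv AI * AIG \<in> carrier_mat nG nG"
    using AG AGI AIG mat_inv[OF AI spd_four_block_upper_left_det] by auto
  ultimately show ?thesis
    using congruence_inverse[OF RG Ri(1) _ X Ri(2,3)] unfolding SI_def by metis
qed

end

end

theorem mainTheorem4:
  fixes nI nG k :: nat
    and AI AIG AGI AG RG U Sig :: "real mat"
  assumes AI: "AI \<in> carrier_mat nI nI"
    and AIG: "AIG \<in> carrier_mat nI nG"
    and AGI: "AGI \<in> carrier_mat nG nI"
    and AG: "AG \<in> carrier_mat nG nG"
    and AIG_T: "AIG = AGI\<^sup>T"
    and A_spd: "spd_mat (nI + nG) (four_block_mat AI AIG AGI AG)"
    and chol: "cholesky_factor nG AG RG"
    and U: "U \<in> carrier_mat nG k"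
    and U_orth: "U\<^sup>T * U = 1\<^sub>m k"
    and Sig: "Sig \<in> carrier_mat k k"
    and Sig_diag: "diagonal_mat Sig"
    and eig: "((mat_inv RG)\<^sup>T * AGI * mat_inv (AI - AIG * mat_inv AG * AGI) * AIG * mat_inv RG) * U = U * Sig"
  defines "P1 \<equiv> 1\<^sub>m nG + U * Sig * U\<^sup>T"
    and "B \<equiv> (mat_inv RG)\<^sup>T * (AG - AGI * mat_inv AI * AIG) * mat_inv RG"
    and "M1 \<equiv> mat_inv AG + (mat_inv RG * U) * Sig * (mat_inv RG * U)\<^sup>T"
  shows "P1 * B = B - U * mat_inv (1\<^sub>m k + Sig) * U\<^sup>T + U * U\<^sup>T
    \<and> (\<forall>y \<in> carrier_vec k. (P1 * B) *\<^sub>v (U *\<^sub>v y) = U *\<^sub>v y)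
    \<and> (\<forall>x \<in> carrier_vec nG. U\<^sup>T *\<^sub>v x = 0\<^sub>v k \<longrightarrow>
           (P1 * B) *\<^sub>v x = B *\<^sub>v x \<and> U\<^sup>T *\<^sub>v (B *\<^sub>v x) = 0\<^sub>v k)
    \<and> char_poly (P1 * B) = char_poly (M1 * (AG - AGI * mat_inv AI * AIG))"
proof -
  let ?SG = "AG - AGI * mat_inv AI * AIG" and ?D = "mat_inv (1\<^sub>m k + Sig)"
  let ?K = "(mat_inv RG)\<^sup>T * AGI * mat_inv (AI - AIG * mat_inv AG * AGI) * AIG * mat_inv RG"
  have RG: "RG \<in> carrier_mat nG nG" using chol unfolding cholesky_factor_def by auto
  note det_RG = cholesky_factor_det(1)[OF chol]
    and det_AI = spd_four_block_upper_left_det[OF AI AIG AGI AG A_spd]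
  have SG: "?SG \<in> carrier_mat nG nG" using AG AGI AIG mat_inv[OF AI det_AI] by auto
  have Ri: "mat_inv RG \<in> carrier_mat nG nG" using mat_inv[OF RG det_RG] by auto
  have B: "B \<in> carrier_mat nG nG" unfolding B_def using Ri SG by auto
  have K: "?K \<in> carrier_mat nG nG" using Ri AGI AIG mat_inv[OF AG cholesky_factor_det(2)[OF chol]] by auto
  have B_inv: "B * (1\<^sub>m nG + ?K) = 1\<^sub>m nG"
    unfolding B_def by (rule preconditioned_schur_complement_inverse[OF AI AIG AGI AG A_spd chol])
  have B_sym: "B\<^sup>T = B" unfolding B_def
    using Ri AG AGI AIG schur_complement_sym[OF AI AIG AGI AG A_spd]
    by (simp add: transpose_mult_dim assoc_mult_mat_dim)
  note Sig_sym = transpose_diagonal_mat[OF Sig Sig_diag]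
  note eigvecs = inverse_eigenvectors[OF B K B_inv U U_orth Sig eig]
  have D: "?D \<in> carrier_mat k k" using mat_inv(1)[OF _ eigvecs(1)] Sig by auto
  have P1_B: "P1 * B = B - U * ?D * U\<^sup>T + U * U\<^sup>T"
    unfolding P1_def by (rule deflated_preconditioner_eq[OF B B_sym U Sig Sig_sym eigvecs])
  have "char_poly (M1 * ?SG) = char_poly (P1 * B)"
    unfolding M1_def cholesky_factor_preconditioner[OF chol U Sig] P1_def B_def
    by (rule char_poly_congruence_mult[OF RG det_RG _ SG]) (use U Sig in auto)
  then show ?thesis
    using P1_B deflated_mult_range[OF B U D U_orth eigvecs(2)] deflated_mult_orthogonal[OF B U D]
      orthogonal_complement_invariant[OF B B_sym U D eigvecs(2)] by simp
qed

end
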